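(* Let $x,y\in(0,1)$ and $n\in\mathbb{N}$. Let $X_1,X_2\sim B(n,x)$ be independent, $Y_1,Y_2\sim B(n,y)$ be independent, and $S_{2n}^*\sim B\bigl(2n,\tfrac{x+y}{2}\bigr)$. Then \[ F_{S_{2n}^*}\leqslant_{\mathrm{cx}}\tfrac12\bigl(F_{X_1+X_2}+F_{Y_1+Y_2}\bigr), \] i.e. $\mathbb{E}\,f(S_{2n}^* )\le \tfrac12\bigl(\mathbb{E}\,f(X_1+X_2)+\mathbb{E}\,f(Y_1+Y_2)\bigr)$ for every convex $f:\mathbb{R}\to\mathbb{R}$.
   Context: $B(n,p)$ denotes the binomial distribution: $P(X=k)=\binom nk p^k(1-p)^{n-k}$, $k=0,\dots,n$. $F_X(t)=P(X<t)$. For distribution functions $G,H$ of probability measures with finite first moment, $G\leqslant_{\mathrm{cx}}H$ means $\int f\,dG\le\int f\,dH$ for all convex $f:\mathbb{R}\to\mathbb{R}$ for which the integrals exist; a convex combination of distribution functions is the distribution function of the corresponding mixture. *)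

theory Defs
  imports "HOL-Probability.Probability"
begin

definition sum_indep_pmf :: "nat pmf \<Rightarrow> nat pmf \<Rightarrow> nat pmf" where
  "sum_indep_pmf p q = map_pmf (\<lambda>(a, b). a + b) (pair_pmf p q)"

end

theory Submission
  imports Defs
begin

text \<open>The expectation of \<open>h\<close> under \<open>B(m, p)\<close> is the Bernstein polynomial of \<open>h\<close> in \<open>p\<close>.
  Its second derivative is \<open>m (m - 1)\<close> times the Bernstein polynomial of the second
  forward difference of \<open>h\<close>, which is nonnegative when \<open>h\<close> is the restriction of a
  convex function; so \<open>p \<mapsto> E f(B(m, p))\<close> is convex on \<open>[0, 1]\<close>. Since \<open>X\<^sub>1 + X\<^sub>2 \<sim> B(2n, x)\<close>
  and \<open>Y\<^sub>1 + Y\<^sub>2 \<sim> B(2n, y)\<close>, the claim is Jensen's inequality for this function at the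
  midpoint of \<open>x\<close> and \<open>y\<close>.\<close>

definition forward_diff :: "(nat \<Rightarrow> real) \<Rightarrow> nat \<Rightarrow> real" where
  "forward_diff h k = h (Suc k) - h k"

definition bernstein_poly :: "nat \<Rightarrow> (nat \<Rightarrow> real) \<Rightarrow> real \<Rightarrow> real" where
  "bernstein_poly m h p = (\<Sum>k\<le>m. Bernstein m k p * h k)"

lemma Bernstein_Suc_0: "Bernstein (Suc m) 0 p = (1 - p) * Bernstein m 0 p"
  by (simp add: Bernstein_def)

lemma Bernstein_Suc_Suc:
  "Bernstein (Suc m) (Suc k) p = p * Bernstein m k p + (1 - p) * Bernstein m (Suc k) p"
proof (cases "k < m")
  case True
  then have "m - k = Suc (m - Suc k)" by simp
  then show ?thesis by (simp add: Bernstein_def algebra_simps)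
next
  case False
  then show ?thesis by (simp add: Bernstein_def binomial_eq_0)
qed

lemma bernstein_poly_0 [simp]: "bernstein_poly 0 h p = h 0"
  by (simp add: bernstein_poly_def Bernstein_def)

lemma bernstein_poly_Suc:
  "bernstein_poly (Suc m) h p = p * bernstein_poly m (\<lambda>k. h (Suc k)) p + (1 - p) * bernstein_poly m h p"
proof -
  have vanish: "Bernstein m (Suc m) p = 0" by (simp add: Bernstein_def)
  have "bernstein_poly (Suc m) h p
      = Bernstein (Suc m) 0 p * h 0 + (\<Sum>k\<le>m. Bernstein (Suc m) (Suc k) p * h (Suc k))"
    unfolding bernstein_poly_def by (rule sum.atMost_Suc_shift)
  also have "\<dots> = p * (\<Sum>k\<le>m. Bernstein m k p * h (Suc k))
      + (1 - p) * (Bernstein m 0 p * h 0 + (\<Sum>k\<le>m. Bernstein m (Suc k) p * h (Suc k)))"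
    unfolding Bernstein_Suc_0 Bernstein_Suc_Suc distrib_right sum.distrib
    by (simp add: sum_distrib_left algebra_simps)
  also have "Bernstein m 0 p * h 0 + (\<Sum>k\<le>m. Bernstein m (Suc k) p * h (Suc k))
      = (\<Sum>k\<le>Suc m. Bernstein m k p * h k)"
    by (rule sum.atMost_Suc_shift[symmetric])
  also have "\<dots> = bernstein_poly m h p"
    by (simp add: bernstein_poly_def vanish)
  finally show ?thesis by (simp add: bernstein_poly_def)
qed

lemma bernstein_poly_diff:
  "bernstein_poly m h p - bernstein_poly m g p = bernstein_poly m (\<lambda>k. h k - g k) p"
  unfolding bernstein_poly_def by (simp add: sum_subtractf[symmetric] algebra_simps)

lemma bernstein_poly_nonneg:
  "(\<And>k. 0 \<le> h k) \<Longrightarrow> 0 \<le> p \<Longrightarrow> p \<le> 1 \<Longrightarrow> 0 \<le> bernstein_poly m h p"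
  unfolding bernstein_poly_def by (intro sum_nonneg mult_nonneg_nonneg Bernstein_nonneg) auto

lemma has_real_derivative_bernstein_poly:
  "(bernstein_poly m h has_real_derivative real m * bernstein_poly (m - 1) (forward_diff h) p) (at p)"
proof (induction m arbitrary: h p)
  case 0
  then show ?case by simp
next
  case (Suc m)
  have "bernstein_poly (Suc m) h =
      (\<lambda>p. p * bernstein_poly m (\<lambda>k. h (Suc k)) p + (1 - p) * bernstein_poly m h p)"
    by (rule ext) (rule bernstein_poly_Suc)
  moreover have "real m * (p * bernstein_poly (m - 1) (forward_diff (\<lambda>k. h (Suc k))) p
      + (1 - p) * bernstein_poly (m - 1) (forward_diff h) p) = real m * bernstein_poly m (forward_diff h) p"
  proof (cases m)
    case (Suc m')
    have "forward_diff (\<lambda>k. h (Suc k)) = (\<lambda>k. forward_diff h (Suc k))"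
      by (simp add: forward_diff_def fun_eq_iff)
    then show ?thesis by (simp add: Suc bernstein_poly_Suc)
  qed simp
  moreover have "bernstein_poly m (\<lambda>k. h (Suc k)) p - bernstein_poly m h p
      = bernstein_poly m (forward_diff h) p"
    by (simp add: bernstein_poly_diff forward_diff_def[abs_def])
  ultimately show ?case
    by (auto intro!: derivative_eq_intros Suc.IH simp: algebra_simps)
qed

lemma convex_on_bernstein_poly:
  assumes "\<And>k. 0 \<le> forward_diff (forward_diff h) k"
  shows "convex_on {0..1} (bernstein_poly m h)"
proof (rule f''_ge0_imp_convex)
  show "convex {0..1::real}" by simp
  show "(bernstein_poly m h has_real_derivative real m * bernstein_poly (m - 1) (forward_diff h) p) (at p)"
    for p by (rule has_real_derivative_bernstein_poly)
  show "((\<lambda>p. real m * bernstein_poly (m - 1) (forward_diff h) p) has_real_derivative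
      real m * (real (m - 1) * bernstein_poly (m - 1 - 1) (forward_diff (forward_diff h)) p)) (at p)"
    for p by (intro DERIV_cmult has_real_derivative_bernstein_poly)
  show "0 \<le> real m * (real (m - 1) * bernstein_poly (m - 1 - 1) (forward_diff (forward_diff h)) p)"
    if "p \<in> {0..1}" for p
    using assms that by (intro mult_nonneg_nonneg bernstein_poly_nonneg) auto
qed

lemma forward_diff2_nonneg_if_convex_on:
  assumes "convex_on {0..} f"
  shows "0 \<le> forward_diff (forward_diff (\<lambda>k. f (real k))) k"
proof -
  have "f ((1 - 1/2) * real k + 1/2 * real (k + 2)) \<le> (1 - 1/2) * f (real k) + 1/2 * f (real (k + 2))"
    using convex_onD[OF assms, of "1/2" "real k" "real (k + 2)"] by simp
  moreover have "(1 - 1/2) * real k + 1/2 * real (k + 2) = real (Suc k)"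
    by (simp add: field_simps)
  ultimately have "f (real (Suc k)) \<le> (1 - 1/2) * f (real k) + 1/2 * f (real (k + 2))"
    by simp
  then show ?thesis by (simp add: forward_diff_def algebra_simps)
qed

lemma expectation_binomial_pmf_eq_bernstein_poly:
  "p \<in> {0..1} \<Longrightarrow> measure_pmf.expectation (binomial_pmf m p) h = bernstein_poly m h p"
  by (simp add: expectation_binomial_pmf' bernstein_poly_def Bernstein_def)

lemma sum_indep_pmf_binomial:
  assumes "p \<in> {0..1}"
  shows "sum_indep_pmf (binomial_pmf n p) (binomial_pmf m p) = binomial_pmf (n + m) p"
proof (induction n)
  case 0
  then show ?case using assms
    by (simp add: sum_indep_pmf_def binomial_pmf_0 pair_return_pmf1 pmf.map_comp o_def)
next
  case (Suc n)
  have "sum_indep_pmf (binomial_pmf (Suc n) p) (binomial_pmf m p)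
     = bernoulli_pmf p \<bind> (\<lambda>b. sum_indep_pmf (binomial_pmf n p) (binomial_pmf m p) \<bind>
          (\<lambda>k. return_pmf ((if b then 1 else 0) + k)))"
    using assms unfolding sum_indep_pmf_def
    by (simp add: binomial_pmf_Suc pair_pmf_def map_pmf_def bind_assoc_pmf bind_return_pmf add.assoc)
  also have "\<dots> = binomial_pmf (Suc n + m) p"
    using assms by (simp add: Suc binomial_pmf_Suc)
  finally show ?case .
qed

theorem proposition2:
  fixes x y :: real and n :: nat and f :: "real \<Rightarrow> real"
  assumes "0 < x" "x < 1" "0 < y" "y < 1"
    and "convex_on UNIV f"
  shows "measure_pmf.expectation (binomial_pmf (2 * n) ((x + y) / 2)) (\<lambda>k. f (real k))
    \<le> 1 / 2 * (measure_pmf.expectation (sum_indep_pmf (binomial_pmf n x) (binomial_pmf n x)) (\<lambda>k. f (real k))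
             + measure_pmf.expectation (sum_indep_pmf (binomial_pmf n y) (binomial_pmf n y)) (\<lambda>k. f (real k)))"
proof -
  let ?B = "bernstein_poly (2 * n) (\<lambda>k. f (real k))"
  have xy: "x \<in> {0..1}" "y \<in> {0..1}" "(x + y) / 2 \<in> {0..1}"
    using assms(1-4) by auto
  have "convex_on {0..} f"
    using assms(5) by (rule convex_on_subset) (auto simp: convex_real_interval)
  then have "convex_on {0..1} ?B"
    by (intro convex_on_bernstein_poly forward_diff2_nonneg_if_convex_on)
  then have "?B ((x + y) / 2) \<le> 1/2 * (?B x + ?B y)"
    using convex_onD[of "{0..1}" ?B "1/2" x y] xy by (simp add: add_divide_distrib)
  with xy show ?thesis
    by (simp add: sum_indep_pmf_binomial mult_2 expectation_binomial_pmf_eq_bernstein_poly)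
qed

end
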